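(* Suppose $K\in\mathbb{K}$ and $K'=K-2\eta L^K$ (i.e. $K_i'=K_i-2\eta L_i^K$ for each $i$). If $$0<\eta\le\frac{1}{2\|R+B^T\mathcal{E}(P^K)B\|_{\max}},$$ then $K'\in\mathbb{K}$.
   Context: Let $N_s\ge 1$, $\Omega=\{1,\dots,N_s\}$; tuples $V=(V_1,\dots,V_{N_s})$ of matrices are combined componentwise (so $(R+B^T\mathcal{E}(P^K)B)_i=R_i+B_i^T\mathcal{E}_i(P^K)B_i$), $\|V\|_{\max}=\max_i\|V_i\|$ (spectral norm). Markovian jump linear system: $x_{t+1}=A_{\omega(t)}x_t+B_{\omega(t)}u_t$, $A_i\in\mathbb{R}^{d\times d}$, $B_i\in\mathbb{R}^{d\times k}$; $\{\omega(t)\}$ is a time-homogeneous Markov chain on $\Omega$ with transition probabilities $p_{ij}$ and initial distribution $\pi$ with $\pi_i>0$; $x_0$ is random, independent of the chain, with $\mathbb{E}[x_0x_0^T]\succ0$. The system is mean-square stabilizable. $Q=(Q_i)\succ0$, $R=(R_i)\succ0$. For $K=(K_i)$, $K_i\in\mathbb{R}^{k\times d}$, $u_t=-K_{\omega(t)}x_t$. $\mathbb{K}$ is the set of $K$ making the closed loop $x_{t+1}=(A_{\omega(t)}-B_{\omega(t)}K_{\omega(t)})x_t$ mean-square stable ($\mathbb{E}[x_tx_t^T]\to0$ for all initial conditions). $\mathcal{E}_i(V)=\sum_jp_{ij}V_j$. For $K\in\mathbb{K}$, $P^K$ is the unique solution of $P_i^K=Q_i+K_i^TR_iK_i+(A_i-B_iK_i)^T\mathcal{E}_i(P^K)(A_i-B_iK_i)$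 and $L_i^K=(R_i+B_i^T\mathcal{E}_i(P^K)B_i)K_i-B_i^T\mathcal{E}_i(P^K)A_i$. *)

theory Defs
  imports "HOL-Analysis.Analysis"
begin

text \<open>Modes are elements of a finite type 's (so N_s = CARD('s) >= 1 automatically);
 states live in real^'n, inputs in real^'m. A_i :: real^'n^'n, B_i :: real^'m^'n (d x k),
 K_i :: real^'n^'m (k x d).\<close>

definition stochastic :: "('s::finite \<Rightarrow> 's \<Rightarrow> real) \<Rightarrow> bool" where
  "stochastic p \<longleftrightarrow> (\<forall>i j. 0 \<le> p i j) \<and> (\<forall>i. (\<Sum>j\<in>UNIV. p i j) = 1)"

definition pos_def :: "real^'n^'n \<Rightarrow> bool" where
  "pos_def M \<longleftrightarrow> transpose M = M \<and> (\<forall>x. x \<noteq> 0 \<longrightarrow> 0 < x \<bullet> (M *v x))"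

definition outer :: "real^'n \<Rightarrow> real^'n \<Rightarrow> real^'n^'n" where
  "outer x y = (\<chi> a b. x $ a * y $ b)"

definition closed_loop ::
  "('s \<Rightarrow> real^'n^'n) \<Rightarrow> ('s \<Rightarrow> real^'m^'n) \<Rightarrow> ('s \<Rightarrow> real^'n^'m) \<Rightarrow> 's \<Rightarrow> real^'n^'n" where
  "closed_loop A B K i = A i - B i ** K i"

text \<open>Second moments X_i(t) = E[x_t x_t^T 1{omega(t)=i}] of the closed loop
 x_{t+1} = (A_w - B_w K_w) x_t, with the Markov chain transition probabilities p.\<close>
fun second_moment ::
  "('s::finite \<Rightarrow> real^'n^'n) \<Rightarrow> ('s \<Rightarrow> real^'m^'n) \<Rightarrow> ('s \<Rightarrow> 's \<Rightarrow> real) \<Rightarrow>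
   ('s \<Rightarrow> real^'n^'m) \<Rightarrow> ('s \<Rightarrow> real^'n^'n) \<Rightarrow> nat \<Rightarrow> 's \<Rightarrow> real^'n^'n" where
  "second_moment A B p K X0 0 = X0"
| "second_moment A B p K X0 (Suc t) =
     (\<lambda>j. \<Sum>i\<in>UNIV. p i j *\<^sub>R (closed_loop A B K i ** second_moment A B p K X0 t i
                                   ** transpose (closed_loop A B K i)))"

definition ms_stable ::
  "('s::finite \<Rightarrow> real^'n^'n) \<Rightarrow> ('s \<Rightarrow> real^'m^'n) \<Rightarrow> ('s \<Rightarrow> 's \<Rightarrow> real) \<Rightarrow>
   ('s \<Rightarrow> real^'n^'m) \<Rightarrow> bool" where
  "ms_stable A B p K \<longleftrightarrow>
     (\<forall>i0 x0. (\<lambda>t. \<Sum>i\<in>UNIV. second_moment A B p K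
                  (\<lambda>j. if j = i0 then outer x0 x0 else 0) t i) \<longlonglongrightarrow> 0)"

definition stabilizing_set ::
  "('s::finite \<Rightarrow> real^'n^'n) \<Rightarrow> ('s \<Rightarrow> real^'m^'n) \<Rightarrow> ('s \<Rightarrow> 's \<Rightarrow> real) \<Rightarrow>
   ('s \<Rightarrow> real^'n^'m) set" where
  "stabilizing_set A B p = {K. ms_stable A B p K}"

definition Emap :: "('s::finite \<Rightarrow> 's \<Rightarrow> real) \<Rightarrow> ('s \<Rightarrow> real^'n^'n) \<Rightarrow> 's \<Rightarrow> real^'n^'n" where
  "Emap p V i = (\<Sum>j\<in>UNIV. p i j *\<^sub>R V j)"

definition P_of ::
  "('s::finite \<Rightarrow> real^'n^'n) \<Rightarrow> ('s \<Rightarrow> real^'m^'n) \<Rightarrow> ('s \<Rightarrow> real^'n^'n) \<Rightarrow>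
   ('s \<Rightarrow> real^'m^'m) \<Rightarrow> ('s \<Rightarrow> 's \<Rightarrow> real) \<Rightarrow> ('s \<Rightarrow> real^'n^'m) \<Rightarrow> 's \<Rightarrow> real^'n^'n" where
  "P_of A B Q R p K = (THE P. \<forall>i. P i = Q i + transpose (K i) ** R i ** K i
        + transpose (closed_loop A B K i) ** Emap p P i ** closed_loop A B K i)"

definition L_of ::
  "('s::finite \<Rightarrow> real^'n^'n) \<Rightarrow> ('s \<Rightarrow> real^'m^'n) \<Rightarrow> ('s \<Rightarrow> real^'n^'n) \<Rightarrow>
   ('s \<Rightarrow> real^'m^'m) \<Rightarrow> ('s \<Rightarrow> 's \<Rightarrow> real) \<Rightarrow> ('s \<Rightarrow> real^'n^'m) \<Rightarrow> 's \<Rightarrow> real^'n^'m" where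
  "L_of A B Q R p K i =
     (let EP = Emap p (P_of A B Q R p K) i in
      (R i + transpose (B i) ** EP ** B i) ** K i - transpose (B i) ** EP ** A i)"

definition spec_norm :: "real^'a^'b \<Rightarrow> real" where
  "spec_norm M = onorm (\<lambda>x. M *v x)"

definition max_norm :: "('s::finite \<Rightarrow> real^'a^'b) \<Rightarrow> real" where
  "max_norm V = Max (range (\<lambda>i. spec_norm (V i)))"

end

theory Submission
  imports Defs
begin

(* For a fixed gain K write C_i = A_i - B_i K_i. The second moments evolve by the positive map
   X |-> (sum_i p_ij C_i X_i C_i^T)_j, whose adjoint for the pairing sum_i <M_i, X_i> is the
   Lyapunov operator T_K(M)_i = C_i^T E_i(M) C_i. If K is mean-square stable then T_K^t -> 0, so
   I - T_K is invertible and P^K is the unique solution of P = Q + K^T R K + T_K(P); it is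
   positive semidefinite. Completing the square shows that after the step K' = K - 2 eta L^K with
   2 eta ||R + B^T E(P^K) B|| <= 1 still Q + T_K'(P^K) <= P^K. Hence P^K is a Lyapunov function
   for K': along the second moments of K' the pairing with P^K decreases at least by the pairing
   with Q > 0, so these moments are summable and K' is mean-square stable. *)

lemma inner_transpose_mult: "u \<bullet> (transpose C *v w) = (C *v u) \<bullet> w"
  for C :: "real^'n^'m"
  by (metis dot_lmul_matrix inner_commute transpose_matrix_vector)

lemma inner_symmetric_matrix: "transpose E = E \<Longrightarrow> x \<bullet> (E *v y) = y \<bullet> (E *v x)"
  for E :: "real^'n^'n"
  by (metis inner_commute inner_transpose_mult)

lemma inner_congruence: "u \<bullet> ((transpose C ** E ** C) *v v) = (C *v u) \<bullet> (E *v (C *v v))"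
  for C :: "real^'n^'m" and E :: "real^'m^'m"
  by (simp only: matrix_vector_mul_assoc[symmetric] inner_transpose_mult)

lemma inner_outer: "M \<bullet> outer x y = x \<bullet> (M *v y)"
  for M :: "real^'n^'n"
  by (simp add: inner_vec_def outer_def matrix_vector_mult_def sum_distrib_left mult_ac)

lemma inner_axis_mult_axis: "axis c 1 \<bullet> (M *v axis d 1) = M $ c $ d"
  for M :: "real^'n^'m"
  by (simp add: inner_axis' inner_axis matrix_vector_mul_component)

lemma inner_eq_trace: "M \<bullet> X = trace (transpose M ** X)"
  for M X :: "real^'n^'m"
  unfolding inner_vec_def trace_def matrix_matrix_mult_def transpose_def
  by (simp add: inner_real_def) (rule sum.swap)

lemma inner_congruence_matrix: "M \<bullet> (C ** X ** transpose C) = (transpose C ** M ** C) \<bullet> X"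
  for C :: "real^'n^'m"
proof -
  have "trace (transpose M ** (C ** X ** transpose C)) = trace (transpose C ** (transpose M ** C ** X))"
    using trace_mul_sym[of "transpose M ** C ** X" "transpose C"] by (simp add: matrix_mul_assoc)
  then show ?thesis
    by (simp add: inner_eq_trace matrix_transpose_mul matrix_mul_assoc)
qed

lemma transpose_add_matrix: "transpose (M + N) = transpose M + transpose N"
  for M N :: "real^'n^'m"
  by (simp add: transpose_def vec_eq_iff)

lemma pos_def_nonneg: "pos_def M \<Longrightarrow> 0 \<le> u \<bullet> (M *v u)"
  unfolding pos_def_def by (cases "u = 0") (auto intro: less_imp_le)

lemma pos_def_coercive:
  fixes M :: "real^'n^'n"
  assumes "pos_def M"
  shows "\<exists>q>0. \<forall>u. q * (u \<bullet> u) \<le> u \<bullet> (M *v u)"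
proof -
  let ?f = "\<lambda>u. u \<bullet> (M *v u)"
  have "continuous_on (sphere 0 1) ?f"
    by (intro continuous_intros linear_continuous_on matrix_vector_mul_bounded_linear)
  moreover have "sphere (0::real^'n) 1 \<noteq> {}"
    using norm_axis_1 by (metis mem_sphere_0 empty_iff)
  ultimately obtain x where x: "x \<in> sphere 0 1" "\<forall>y\<in>sphere 0 1. ?f x \<le> ?f y"
    using continuous_attains_inf[OF compact_sphere] by blast
  have "x \<noteq> 0"
    using x(1) by auto
  then have "0 < ?f x"
    using assms unfolding pos_def_def by blast
  moreover have "?f x * (u \<bullet> u) \<le> ?f u" for u
  proof (cases "u = 0")
    case False
    then have "(1 / norm u) *\<^sub>R u \<in> sphere 0 1"
      by simp
    then have "?f x \<le> ?f ((1 / norm u) *\<^sub>R u)"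
      using x(2) by blast
    also have "\<dots> = ?f u / (u \<bullet> u)"
      by (simp add: matrix_vector_mult_scaleR power2_norm_eq_inner[symmetric] power2_eq_square)
    finally show ?thesis
      using False by (simp add: field_simps)
  qed simp
  ultimately show ?thesis
    by blast
qed

lemma quadratic_le_max_norm:
  fixes V :: "'s::finite \<Rightarrow> real^'n^'n"
  shows "w \<bullet> (V i *v w) \<le> max_norm V * (w \<bullet> w)"
proof -
  have "w \<bullet> (V i *v w) \<le> norm w * norm (V i *v w)"
    by (rule norm_cauchy_schwarz)
  also have "\<dots> \<le> norm w * (spec_norm (V i) * norm w)"
    unfolding spec_norm_def by (intro mult_left_mono onorm matrix_vector_mul_bounded_linear) auto
  also have "\<dots> \<le> norm w * (max_norm V * norm w)"
    unfolding max_norm_def by (intro mult_left_mono mult_right_mono Max_ge) auto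
  also have "\<dots> = max_norm V * (w \<bullet> w)"
    by (simp add: dot_square_norm power2_eq_square)
  finally show ?thesis .
qed

section \<open>The Lyapunov operator as adjoint of the second-moment recursion\<close>

definition lyap_op ::
  "('s::finite \<Rightarrow> real^'n^'n) \<Rightarrow> ('s \<Rightarrow> real^'m^'n) \<Rightarrow> ('s \<Rightarrow> 's \<Rightarrow> real) \<Rightarrow>
   ('s \<Rightarrow> real^'n^'m) \<Rightarrow> ('s \<Rightarrow> real^'n^'n) \<Rightarrow> 's \<Rightarrow> real^'n^'n" where
  "lyap_op A B p K M i = transpose (closed_loop A B K i) ** Emap p M i ** closed_loop A B K i"

definition mode_inner :: "('s::finite \<Rightarrow> real^'n^'n) \<Rightarrow> ('s \<Rightarrow> real^'n^'n) \<Rightarrow> real" where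
  "mode_inner M X = (\<Sum>i\<in>UNIV. M i \<bullet> X i)"

definition mode_unit :: "'s \<Rightarrow> 'n \<Rightarrow> 'n \<Rightarrow> 's \<Rightarrow> real^'n^'n" where
  "mode_unit j a b = (\<lambda>k. if k = j then axis a (axis b 1) else 0)"

definition mode_outer :: "'s \<Rightarrow> real^'n \<Rightarrow> 's \<Rightarrow> real^'n^'n" where
  "mode_outer i x = (\<lambda>k. if k = i then outer x x else 0)"

lemma Emap_mult_vector: "Emap p M i *v w = (\<Sum>j\<in>UNIV. p i j *\<^sub>R (M j *v w))"
  by (simp add: Emap_def vec_eq_iff matrix_vector_mult_def sum_distrib_left sum_distrib_right mult_ac
      sum_component)
    (intro allI, rule sum.swap)

lemma Emap_transpose: "transpose (Emap p M i) = Emap p (\<lambda>j. transpose (M j)) i"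
  by (simp add: Emap_def transpose_def vec_eq_iff sum_component)

lemma lyap_op_quadratic:
  "u \<bullet> (lyap_op A B p K M i *v v)
     = (\<Sum>j\<in>UNIV. p i j * ((closed_loop A B K i *v u) \<bullet> (M j *v (closed_loop A B K i *v v))))"
  by (simp add: lyap_op_def inner_congruence Emap_mult_vector inner_sum_right)

lemma lyap_op_entry:
  "lyap_op A B p K M i $ c $ d
     = (\<Sum>j\<in>UNIV. p i j * ((closed_loop A B K i *v axis c 1) \<bullet> (M j *v (closed_loop A B K i *v axis d 1))))"
  unfolding inner_axis_mult_axis[symmetric] by (rule lyap_op_quadratic)

lemma lyap_op_add: "lyap_op A B p K (\<lambda>j. M j + N j) i = lyap_op A B p K M i + lyap_op A B p K N i"
  by (simp add: vec_eq_iff lyap_op_entry matrix_vector_mult_add_rdistrib inner_add_right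
      distrib_left sum.distrib)

lemma lyap_op_diff: "lyap_op A B p K (\<lambda>j. M j - N j) i = lyap_op A B p K M i - lyap_op A B p K N i"
  by (simp add: vec_eq_iff lyap_op_entry matrix_vector_mult_diff_rdistrib inner_diff_right
      right_diff_distrib sum_subtractf)

lemma lyap_op_scaleR: "lyap_op A B p K (\<lambda>j. r *\<^sub>R M j) i = r *\<^sub>R lyap_op A B p K M i"
  by (simp add: vec_eq_iff lyap_op_entry scaleR_matrix_vector_assoc[symmetric] sum_distrib_left
      mult.left_commute)

lemma lyap_op_transpose:
  "transpose (lyap_op A B p K M i) = lyap_op A B p K (\<lambda>j. transpose (M j)) i"
  by (simp add: lyap_op_def matrix_transpose_mul Emap_transpose matrix_mul_assoc)

lemma mode_inner_add: "mode_inner (\<lambda>i. M i + N i) X = mode_inner M X + mode_inner N X"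
  by (simp add: mode_inner_def inner_add_left sum.distrib)

lemma mode_inner_diff: "mode_inner (\<lambda>i. M i - N i) X = mode_inner M X - mode_inner N X"
  by (simp add: mode_inner_def inner_diff_left sum_subtractf)

lemma mode_inner_scaleR: "mode_inner (\<lambda>i. r *\<^sub>R M i) X = r * mode_inner M X"
  by (simp add: mode_inner_def sum_distrib_left)

lemma mode_inner_unit_right: "mode_inner M (mode_unit j a b) = M j $ a $ b"
  by (simp add: mode_inner_def mode_unit_def if_distrib inner_axis cong: if_cong)

lemma mode_inner_unit_left: "mode_inner (mode_unit j a b) X = X j $ a $ b"
  using mode_inner_unit_right[of X j a b]
  by (simp add: mode_inner_def mode_unit_def inner_commute)

lemma mode_inner_outer: "mode_inner M (mode_outer i x) = x \<bullet> (M i *v x)"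
  by (simp add: mode_inner_def mode_outer_def if_distrib inner_outer cong: if_cong)

lemma mode_inner_second_moment_Suc:
  "mode_inner M (second_moment A B p K X0 (Suc t))
     = mode_inner (lyap_op A B p K M) (second_moment A B p K X0 t)"
proof -
  let ?C = "closed_loop A B K" and ?X = "second_moment A B p K X0 t"
  have "mode_inner (lyap_op A B p K M) ?X = (\<Sum>i\<in>UNIV. Emap p M i \<bullet> (?C i ** ?X i ** transpose (?C i)))"
    by (simp add: mode_inner_def lyap_op_def inner_congruence_matrix)
  also have "\<dots> = (\<Sum>i\<in>UNIV. \<Sum>j\<in>UNIV. p i j * (M j \<bullet> (?C i ** ?X i ** transpose (?C i))))"
    by (simp add: Emap_def inner_sum_left)
  also have "\<dots> = mode_inner M (second_moment A B p K X0 (Suc t))"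
    by (simp add: mode_inner_def inner_sum_right) (rule sum.swap)
  finally show ?thesis ..
qed

lemma mode_inner_second_moment:
  "mode_inner M (second_moment A B p K X0 t) = mode_inner ((lyap_op A B p K ^^ t) M) X0"
proof (induction t arbitrary: M)
  case (Suc t)
  then show ?case
    by (simp only: mode_inner_second_moment_Suc funpow_Suc_right comp_apply)
qed simp

lemma second_moment_entry:
  "second_moment A B p K X0 t j $ a $ b = mode_inner ((lyap_op A B p K ^^ t) (mode_unit j a b)) X0"
  using mode_inner_second_moment[of "mode_unit j a b"] by (simp add: mode_inner_unit_left)

definition psd :: "('s \<Rightarrow> real^'n^'n) \<Rightarrow> bool" where
  "psd M \<longleftrightarrow> (\<forall>j u. 0 \<le> u \<bullet> (M j *v u))"

(* block_psd M Z N: the block matrices [[M j, Z j], [(Z j)^T, N j]] are positive semidefinite.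
   This is preserved by the Lyapunov operator and bounds off-diagonal entries by diagonal ones,
   which are all that mean-square stability controls directly. *)
definition block_psd :: "('s \<Rightarrow> real^'n^'n) \<Rightarrow> ('s \<Rightarrow> real^'n^'n) \<Rightarrow> ('s \<Rightarrow> real^'n^'n) \<Rightarrow> bool" where
  "block_psd M Z N \<longleftrightarrow> (\<forall>j u v. 0 \<le> u \<bullet> (M j *v u) + 2 * (u \<bullet> (Z j *v v)) + v \<bullet> (N j *v v))"

lemma block_psd_lyap_op:
  assumes "\<forall>i j. 0 \<le> p i j" "block_psd M Z N"
  shows "block_psd (lyap_op A B p K M) (lyap_op A B p K Z) (lyap_op A B p K N)"
  unfolding block_psd_def
proof (intro allI)
  fix i u v
  let ?u = "closed_loop A B K i *v u" and ?v = "closed_loop A B K i *v v"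
  have "u \<bullet> (lyap_op A B p K M i *v u) + 2 * (u \<bullet> (lyap_op A B p K Z i *v v))
        + v \<bullet> (lyap_op A B p K N i *v v)
      = (\<Sum>j\<in>UNIV. p i j * (?u \<bullet> (M j *v ?u) + 2 * (?u \<bullet> (Z j *v ?v)) + ?v \<bullet> (N j *v ?v)))"
    unfolding lyap_op_quadratic by (simp add: sum.distrib sum_distrib_left distrib_left mult.left_commute)
  also have "\<dots> \<ge> 0"
    using assms unfolding block_psd_def by (intro sum_nonneg mult_nonneg_nonneg) auto
  finally show "0 \<le> u \<bullet> (lyap_op A B p K M i *v u) + 2 * (u \<bullet> (lyap_op A B p K Z i *v v))
        + v \<bullet> (lyap_op A B p K N i *v v)" .
qed

lemma block_psd_lyap_iter:
  assumes "\<forall>i j. 0 \<le> p i j" "block_psd M Z N"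
  shows "block_psd ((lyap_op A B p K ^^ t) M) ((lyap_op A B p K ^^ t) Z) ((lyap_op A B p K ^^ t) N)"
  by (induction t) (simp_all add: assms block_psd_lyap_op)

lemma block_psd_imp_psd:
  assumes "block_psd M Z N"
  shows "psd M"
  unfolding psd_def
proof (intro allI)
  fix j u
  have "0 \<le> u \<bullet> (M j *v u) + 2 * (u \<bullet> (Z j *v 0)) + 0 \<bullet> (N j *v 0)"
    using assms unfolding block_psd_def by blast
  then show "0 \<le> u \<bullet> (M j *v u)"
    by simp
qed

lemma psd_imp_block_psd: "psd M \<Longrightarrow> block_psd M (\<lambda>_. 0) (\<lambda>_. 0)"
  by (simp add: psd_def block_psd_def)

lemma psd_lyap_iter:
  assumes "\<forall>i j. 0 \<le> p i j" "psd M"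
  shows "psd ((lyap_op A B p K ^^ t) M)"
  using block_psd_lyap_iter[OF assms(1) psd_imp_block_psd[OF assms(2)]] by (rule block_psd_imp_psd)

lemma block_psd_bound:
  fixes M Z N :: "'s \<Rightarrow> real^'n^'n"
  assumes "block_psd M Z N"
  shows "\<bar>u \<bullet> (Z j *v v)\<bar> \<le> (u \<bullet> (M j *v u) + v \<bullet> (N j *v v)) / 2"
proof -
  have neg: "X *v - v = - (X *v v)" for X :: "real^'n^'n"
    using matrix_vector_mult_diff_distrib[of X 0 v] by simp
  have "0 \<le> u \<bullet> (M j *v u) + 2 * (u \<bullet> (Z j *v v)) + v \<bullet> (N j *v v)"
    and "0 \<le> u \<bullet> (M j *v u) + 2 * (u \<bullet> (Z j *v - v)) + (- v) \<bullet> (N j *v - v)"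
    using assms unfolding block_psd_def by blast+
  then show ?thesis
    unfolding neg inner_minus_left inner_minus_right by (simp add: abs_le_iff)
qed

lemma mode_unit_quadratic: "u \<bullet> (mode_unit j a b k *v v) = (if k = j then u $ a * v $ b else 0)"
proof -
  have "axis a (axis b 1) \<bullet> outer u v = u $ a * v $ b"
    by (simp add: inner_axis' outer_def)
  then show ?thesis
    by (simp add: mode_unit_def inner_outer[symmetric])
qed

lemma block_psd_mode_unit: "block_psd (mode_unit j a a) (mode_unit j a b) (mode_unit j b b)"
  for a b :: "'n::finite"
  unfolding block_psd_def mode_unit_quadratic
proof (intro allI)
  fix k and u v :: "real^'n"
  have "0 \<le> (u $ a + v $ b)\<^sup>2"
    by simp
  then show "0 \<le> (if k = j then u $ a * u $ a else 0) + 2 * (if k = j then u $ a * v $ b else 0)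
      + (if k = j then v $ b * v $ b else 0)"
    by (simp add: power2_eq_square algebra_simps)
qed

lemma psd_mode_unit: "psd (mode_unit j a a)"
  using block_psd_imp_psd[OF block_psd_mode_unit[of j a a]] .

lemma psd_if_pos_def: "\<forall>i. pos_def (Q i) \<Longrightarrow> psd Q"
  unfolding psd_def by (simp add: pos_def_nonneg)

lemma psd_stage_cost:
  assumes "\<forall>i. pos_def (Q i)" "\<forall>i. pos_def (R i)"
  shows "psd (\<lambda>i. Q i + transpose (K i) ** R i ** K i)"
  unfolding psd_def
proof (intro allI)
  fix i u
  have "0 \<le> u \<bullet> (Q i *v u) + (K i *v u) \<bullet> (R i *v (K i *v u))"
    using assms by (simp add: pos_def_nonneg)
  then show "0 \<le> u \<bullet> ((Q i + transpose (K i) ** R i ** K i) *v u)"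
    by (simp add: matrix_vector_mult_add_rdistrib inner_add_right inner_congruence)
qed

lemma mode_inner_second_moment_nonneg:
  assumes "\<forall>i j. 0 \<le> p i j" "psd M"
  shows "0 \<le> mode_inner M (second_moment A B p K (mode_outer i x) t)"
  using psd_lyap_iter[OF assms, where A=A and B=B and K=K and t=t] unfolding psd_def
  by (simp add: mode_inner_second_moment mode_inner_outer)

lemma second_moment_diag_nonneg:
  assumes "\<forall>i j. 0 \<le> p i j"
  shows "0 \<le> second_moment A B p K (mode_outer i x) t j $ a $ a"
  using mode_inner_second_moment_nonneg[OF assms psd_mode_unit] by (simp add: mode_inner_unit_left)

lemma second_moment_offdiag_bound:
  assumes "\<forall>i j. 0 \<le> p i j"
  shows "\<bar>second_moment A B p K (mode_outer i x) t j $ a $ b\<bar>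
    \<le> (second_moment A B p K (mode_outer i x) t j $ a $ a
        + second_moment A B p K (mode_outer i x) t j $ b $ b) / 2"
  using block_psd_bound[OF block_psd_lyap_iter[OF assms block_psd_mode_unit, where A=A and B=B and K=K
        and t=t], where j=i and u=x and v=x]
  by (simp add: second_moment_entry mode_inner_outer)

lemma lyap_iter_unit_offdiag_bound:
  assumes "\<forall>i j. 0 \<le> p i j"
  shows "\<bar>(lyap_op A B p K ^^ t) (mode_unit j a b) i $ c $ d\<bar>
    \<le> ((lyap_op A B p K ^^ t) (mode_unit j a a) i $ c $ c
        + (lyap_op A B p K ^^ t) (mode_unit j b b) i $ d $ d) / 2"
  using block_psd_bound[OF block_psd_lyap_iter[OF assms block_psd_mode_unit, where A=A and B=B and K=K
        and t=t], where j=i and u="axis c 1" and v="axis d 1"]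
  by (simp add: inner_axis_mult_axis)

section \<open>Mean-square stability and decay of the Lyapunov iterates\<close>

lemma tendsto_zero_if_abs_le_mean:
  fixes x y z :: "nat \<Rightarrow> real"
  assumes "\<And>t. \<bar>z t\<bar> \<le> (x t + y t) / 2" "x \<longlonglongrightarrow> 0" "y \<longlonglongrightarrow> 0"
  shows "z \<longlonglongrightarrow> 0"
proof (rule Lim_null_comparison)
  show "\<forall>\<^sub>F t in sequentially. norm (z t) \<le> (x t + y t) / 2"
    using assms(1) by simp
  show "(\<lambda>t. (x t + y t) / 2) \<longlonglongrightarrow> 0"
    using tendsto_divide[OF tendsto_add[OF assms(2,3)] tendsto_const, of 2] by simp
qed

lemma ms_stable_iff:
  "ms_stable A B p K
     \<longleftrightarrow> (\<forall>i x. (\<lambda>t. \<Sum>j\<in>UNIV. second_moment A B p K (mode_outer i x) t j) \<longlonglongrightarrow> 0)"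
  by (simp add: ms_stable_def mode_outer_def)

lemma ms_stable_diag_tendsto_zero:
  assumes "\<forall>i j. 0 \<le> p i j" "ms_stable A B p K"
  shows "(\<lambda>t. second_moment A B p K (mode_outer i x) t j $ a $ a) \<longlonglongrightarrow> 0"
proof (rule Lim_null_comparison)
  let ?Y = "second_moment A B p K (mode_outer i x)"
  have "(\<lambda>t. (\<Sum>k\<in>UNIV. ?Y t k) $ a $ a) \<longlonglongrightarrow> 0"
    using assms(2) unfolding ms_stable_iff by (metis tendsto_vec_nth zero_index)
  then show "(\<lambda>t. \<Sum>k\<in>UNIV. ?Y t k $ a $ a) \<longlonglongrightarrow> 0"
    by (simp add: sum_component)
  show "\<forall>\<^sub>F t in sequentially. norm (?Y t j $ a $ a) \<le> (\<Sum>k\<in>UNIV. ?Y t k $ a $ a)"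
  proof (intro always_eventually allI)
    fix t
    have nonneg: "0 \<le> ?Y t k $ a $ a" for k
      by (rule second_moment_diag_nonneg[OF assms(1)])
    have "?Y t j $ a $ a \<le> (\<Sum>k\<in>UNIV. ?Y t k $ a $ a)"
      by (rule member_le_sum) (simp_all add: nonneg)
    with nonneg show "norm (?Y t j $ a $ a) \<le> (\<Sum>k\<in>UNIV. ?Y t k $ a $ a)"
      by simp
  qed
qed

lemma ms_stable_if_diag_tendsto_zero:
  assumes "\<forall>i j. 0 \<le> p i j"
    and "\<And>i x j a. (\<lambda>t. second_moment A B p K (mode_outer i x) t j $ a $ a) \<longlonglongrightarrow> 0"
  shows "ms_stable A B p K"
  unfolding ms_stable_iff
proof (intro allI)
  fix i x
  let ?Y = "second_moment A B p K (mode_outer i x)"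
  have "(\<lambda>t. ?Y t j $ a $ b) \<longlonglongrightarrow> 0" for j a b
    by (rule tendsto_zero_if_abs_le_mean[OF second_moment_offdiag_bound[OF assms(1)] assms(2) assms(2)])
  then show "(\<lambda>t. \<Sum>j\<in>UNIV. ?Y t j) \<longlonglongrightarrow> 0"
    by (intro vec_tendstoI) (simp add: sum_component tendsto_null_sum)
qed

lemma lyap_iter_unit_tendsto_zero:
  assumes "\<forall>i j. 0 \<le> p i j" "ms_stable A B p K"
  shows "(\<lambda>t. (lyap_op A B p K ^^ t) (mode_unit j a b) i $ c $ d) \<longlonglongrightarrow> 0"
proof -
  have diag: "(\<lambda>t. (lyap_op A B p K ^^ t) (mode_unit j a a) i $ c $ c) \<longlonglongrightarrow> 0" for a c
  proof -
    have "(lyap_op A B p K ^^ t) (mode_unit j a a) i $ c $ c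
        = second_moment A B p K (mode_outer i (axis c 1)) t j $ a $ a" for t
      by (simp add: second_moment_entry mode_inner_outer inner_axis_mult_axis)
    then show ?thesis
      using ms_stable_diag_tendsto_zero[OF assms, of i "axis c 1" j a] by simp
  qed
  show ?thesis
    by (rule tendsto_zero_if_abs_le_mean[OF lyap_iter_unit_offdiag_bound[OF assms(1)] diag diag])
qed

lemma lyap_iter_entry:
  "(lyap_op A B p K ^^ t) M i $ c $ d
     = (\<Sum>j\<in>UNIV. \<Sum>a\<in>UNIV. \<Sum>b\<in>UNIV. M j $ a $ b * (lyap_op A B p K ^^ t) (mode_unit j a b) i $ c $ d)"
proof -
  have "(lyap_op A B p K ^^ t) M i $ c $ d = mode_inner M (second_moment A B p K (mode_unit i c d) t)"
    by (simp add: mode_inner_second_moment mode_inner_unit_right)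
  also have "\<dots> = (\<Sum>j\<in>UNIV. \<Sum>a\<in>UNIV. \<Sum>b\<in>UNIV.
      M j $ a $ b * second_moment A B p K (mode_unit i c d) t j $ a $ b)"
    by (simp add: mode_inner_def inner_vec_def)
  finally show ?thesis
    by (simp only: second_moment_entry mode_inner_unit_right)
qed

lemma lyap_iter_tendsto_zero:
  assumes "\<forall>i j. 0 \<le> p i j" "ms_stable A B p K"
  shows "(\<lambda>t. (lyap_op A B p K ^^ t) M i $ c $ d) \<longlonglongrightarrow> 0"
  by (subst lyap_iter_entry) (intro tendsto_null_sum tendsto_mult_right_zero lyap_iter_unit_tendsto_zero[OF assms])

lemma mode_inner_lyap_iter_tendsto_zero:
  assumes "\<forall>i j. 0 \<le> p i j" "ms_stable A B p K"
  shows "(\<lambda>t. mode_inner ((lyap_op A B p K ^^ t) M) X) \<longlonglongrightarrow> 0"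
  unfolding mode_inner_def inner_vec_def inner_real_def
  by (intro tendsto_null_sum tendsto_mult_left_zero lyap_iter_tendsto_zero[OF assms])

section \<open>The Lyapunov equation\<close>

lemma lyap_fixpoint_eq_zero:
  assumes "\<forall>i j. 0 \<le> p i j" "ms_stable A B p K" "lyap_op A B p K D = D"
  shows "D = (\<lambda>_. 0)"
proof -
  have "(lyap_op A B p K ^^ t) D = D" for t
    by (induction t) (simp_all add: assms(3))
  then have "(\<lambda>t. D i $ c $ d) \<longlonglongrightarrow> 0" for i c d
    using lyap_iter_tendsto_zero[OF assms(1,2), of D i c d] by simp
  then show ?thesis
    by (simp add: fun_eq_iff vec_eq_iff LIMSEQ_const_iff)
qed

lemma lyap_eq_unique:
  assumes "\<forall>i j. 0 \<le> p i j" "ms_stable A B p K"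
    and "\<forall>i. P i = W i + lyap_op A B p K P i" "\<forall>i. P' i = W i + lyap_op A B p K P' i"
  shows "P = P'"
proof -
  have "lyap_op A B p K (\<lambda>j. P j - P' j) i = P i - P' i" for i
    using assms(3,4)[rule_format, of i] by (simp add: lyap_op_diff)
  then have "lyap_op A B p K (\<lambda>j. P j - P' j) = (\<lambda>j. P j - P' j)"
    by (simp add: fun_eq_iff)
  from lyap_fixpoint_eq_zero[OF assms(1,2) this] show ?thesis
    by (simp add: fun_eq_iff)
qed

lemma lyap_eq_solvable:
  fixes W :: "'s::finite \<Rightarrow> real^'n^'n"
  assumes "\<forall>i j. 0 \<le> p i j" "ms_stable A B p K"
  shows "\<exists>P. \<forall>i. P i = W i + lyap_op A B p K P i"
proof -
  define F :: "(real^'n^'n)^'s \<Rightarrow> (real^'n^'n)^'s" where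
    "F v = (\<chi> i. v $ i - lyap_op A B p K (($) v) i)" for v
  have lin: "linear F"
  proof (rule linearI)
    fix x y :: "(real^'n^'n)^'s" and r :: real
    have "($) (x + y) = (\<lambda>j. x $ j + y $ j)" "($) (r *\<^sub>R x) = (\<lambda>j. r *\<^sub>R x $ j)"
      by auto
    then show "F (x + y) = F x + F y" "F (r *\<^sub>R x) = r *\<^sub>R F x"
      by (simp_all add: F_def vec_eq_iff lyap_op_add lyap_op_scaleR algebra_simps)
  qed
  have "inj F"
    unfolding linear_inj_iff_eq_0[OF lin]
  proof (intro allI impI)
    fix v
    assume "F v = 0"
    then have "lyap_op A B p K (($) v) = ($) v"
      by (simp add: F_def vec_eq_iff fun_eq_iff)
    from lyap_fixpoint_eq_zero[OF assms this] show "v = 0"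
      by (simp add: vec_eq_iff fun_eq_iff)
  qed
  then have "surj F"
    by (rule linear_inj_imp_surj[OF lin])
  then obtain v where "F v = (\<chi> i. W i)"
    using surjD[of F "\<chi> i. W i"] by auto
  then show ?thesis
    by (intro exI[of _ "($) v"]) (simp add: F_def vec_eq_iff algebra_simps)
qed

lemma lyap_eq_solution_psd:
  assumes p: "\<forall>i j. 0 \<le> p i j" and "ms_stable A B p K"
    and P: "\<forall>i. P i = W i + lyap_op A B p K P i" and "psd W"
  shows "psd P"
  unfolding psd_def
proof (intro allI)
  fix i u
  have P_fun: "P = (\<lambda>i. W i + lyap_op A B p K P i)"
    using P by (simp add: fun_eq_iff)
  define h where "h t = mode_inner P (second_moment A B p K (mode_outer i u) t)" for t
  have "h (Suc t) \<le> h t" for t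
  proof -
    have "h t = mode_inner W (second_moment A B p K (mode_outer i u) t) + h (Suc t)"
      unfolding h_def mode_inner_second_moment_Suc mode_inner_add[symmetric]
      by (simp only: P_fun[symmetric])
    then show ?thesis
      using mode_inner_second_moment_nonneg[OF p \<open>psd W\<close>] by simp
  qed
  then have "decseq h"
    by (rule decseq_SucI)
  moreover have "h \<longlonglongrightarrow> 0"
    unfolding h_def mode_inner_second_moment
    by (rule mode_inner_lyap_iter_tendsto_zero[OF assms(1,2)])
  ultimately have "0 \<le> h 0"
    by (rule decseq_ge)
  then show "0 \<le> u \<bullet> (P i *v u)"
    by (simp add: h_def mode_inner_outer)
qed

lemma P_of_lyap_eq:
  assumes "\<forall>i j. 0 \<le> p i j" "ms_stable A B p K"
  shows "P_of A B Q R p K i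
    = Q i + transpose (K i) ** R i ** K i + lyap_op A B p K (P_of A B Q R p K) i"
proof -
  obtain P where P: "\<forall>i. P i = Q i + transpose (K i) ** R i ** K i + lyap_op A B p K P i"
    using lyap_eq_solvable[OF assms, of "\<lambda>i. Q i + transpose (K i) ** R i ** K i"] by blast
  have "P_of A B Q R p K = P"
    unfolding P_of_def lyap_op_def[symmetric]
  proof (rule the_equality)
    show "\<forall>i. P i = Q i + transpose (K i) ** R i ** K i + lyap_op A B p K P i"
      by (rule P)
    fix P'
    assume "\<forall>i. P' i = Q i + transpose (K i) ** R i ** K i + lyap_op A B p K P' i"
    then show "P' = P"
      by (rule lyap_eq_unique[OF assms _ P])
  qed
  with P show ?thesis
    by simp
qed

lemma P_of_symmetric:
  assumes "\<forall>i j. 0 \<le> p i j" "ms_stable A B p K"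
    and "\<forall>i. transpose (Q i) = Q i" "\<forall>i. transpose (R i) = R i"
  shows "transpose (P_of A B Q R p K i) = P_of A B Q R p K i"
proof -
  let ?P = "P_of A B Q R p K" and ?W = "\<lambda>i. Q i + transpose (K i) ** R i ** K i"
  have "transpose (?P i) = ?W i + lyap_op A B p K (\<lambda>j. transpose (?P j)) i" for i
  proof -
    have "transpose (?P i) = transpose (?W i + lyap_op A B p K ?P i)"
      using P_of_lyap_eq[OF assms(1,2)] by (rule arg_cong)
    also have "\<dots> = ?W i + lyap_op A B p K (\<lambda>j. transpose (?P j)) i"
      using assms(3,4)
      by (simp add: transpose_add_matrix lyap_op_transpose matrix_transpose_mul matrix_mul_assoc)
    finally show ?thesis .
  qed
  then have "\<forall>i. transpose (?P i) = ?W i + lyap_op A B p K (\<lambda>j. transpose (?P j)) i"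
    by blast
  moreover have "\<forall>i. ?P i = ?W i + lyap_op A B p K ?P i"
    using P_of_lyap_eq[OF assms(1,2)] by blast
  ultimately have "(\<lambda>j. transpose (?P j)) = ?P"
    by (rule lyap_eq_unique[OF assms(1,2)])
  then show ?thesis
    by (rule fun_cong)
qed

lemma P_of_psd:
  assumes "\<forall>i j. 0 \<le> p i j" "ms_stable A B p K" "\<forall>i. pos_def (Q i)" "\<forall>i. pos_def (R i)"
  shows "psd (P_of A B Q R p K)"
  using lyap_eq_solution_psd[OF assms(1,2) _ psd_stage_cost[OF assms(3,4)]] P_of_lyap_eq[OF assms(1,2)]
  by blast

section \<open>A Lyapunov criterion for mean-square stability\<close>

lemma second_moment_diag_bound:
  fixes Q :: "'s::finite \<Rightarrow> real^'n^'n"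
  assumes p: "\<forall>i j. 0 \<le> p i j" and "psd Q"
    and q: "0 \<le> q" "\<forall>u. q * (u \<bullet> u) \<le> u \<bullet> (Q j *v u)"
  shows "q * second_moment A B p K (mode_outer i x) t j $ a $ a
    \<le> mode_inner Q (second_moment A B p K (mode_outer i x) t)"
proof -
  have "psd (\<lambda>k. Q k - q *\<^sub>R mode_unit j a a k)"
    unfolding psd_def
  proof (intro allI)
    fix k and u :: "real^'n"
    have "u $ a * u $ a \<le> u \<bullet> u"
      using power_mono[OF component_le_norm_cart[of u a], of 2]
      by (simp add: dot_square_norm power2_eq_square)
    then have "q * (u $ a * u $ a) \<le> u \<bullet> (Q j *v u)"
      using q by (meson mult_left_mono order.trans)
    then show "0 \<le> u \<bullet> ((Q k - q *\<^sub>R mode_unit j a a k) *v u)"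
      using \<open>psd Q\<close> unfolding psd_def
      by (simp add: matrix_vector_mult_diff_rdistrib inner_diff_right mode_unit_quadratic
          scaleR_matrix_vector_assoc[symmetric])
  qed
  from mode_inner_second_moment_nonneg[OF p this] show ?thesis
    by (simp add: mode_inner_diff mode_inner_scaleR mode_inner_unit_left)
qed

lemma summable_mode_inner_second_moment:
  assumes p: "\<forall>i j. 0 \<le> p i j" and "psd P" "psd Q"
    and decrease: "psd (\<lambda>i. P i - lyap_op A B p K P i - Q i)"
  shows "summable (\<lambda>t. mode_inner Q (second_moment A B p K (mode_outer i x) t))"
proof (rule summableI_nonneg_bounded)
  let ?Y = "second_moment A B p K (mode_outer i x)"
  define h where "h t = mode_inner P (?Y t)" for t
  have step: "mode_inner Q (?Y t) \<le> h t - h (Suc t)" for t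
    using mode_inner_second_moment_nonneg[OF p decrease, of A B K i x t]
    by (simp add: h_def mode_inner_second_moment_Suc mode_inner_diff del: second_moment.simps)
  have telescope: "(\<Sum>t<n. mode_inner Q (?Y t)) \<le> h 0 - h n" for n
  proof (induction n)
    case (Suc n)
    then show ?case
      using step[of n] by simp
  qed simp
  have nonneg: "0 \<le> h n" for n
    unfolding h_def by (rule mode_inner_second_moment_nonneg[OF p \<open>psd P\<close>])
  show "(\<Sum>t<n. mode_inner Q (?Y t)) \<le> h 0" for n
    using telescope[of n] nonneg[of n] by linarith
  show "0 \<le> mode_inner Q (?Y t)" for t
    by (rule mode_inner_second_moment_nonneg[OF p \<open>psd Q\<close>])
qed

lemma ms_stable_if_lyap_decrease:
  assumes p: "\<forall>i j. 0 \<le> p i j" and "psd P" and Q: "\<forall>i. pos_def (Q i)"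
    and decrease: "\<forall>i u. u \<bullet> (Q i *v u) + u \<bullet> (lyap_op A B p K P i *v u) \<le> u \<bullet> (P i *v u)"
  shows "ms_stable A B p K"
proof (rule ms_stable_if_diag_tendsto_zero[OF p])
  fix i x j a
  let ?Y = "second_moment A B p K (mode_outer i x)"
  have "psd Q"
    using Q by (rule psd_if_pos_def)
  moreover have "psd (\<lambda>i. P i - lyap_op A B p K P i - Q i)"
    unfolding psd_def
  proof (intro allI)
    fix k u
    show "0 \<le> u \<bullet> ((P k - lyap_op A B p K P k - Q k) *v u)"
      using decrease[rule_format, where i=k and u=u]
      by (simp add: matrix_vector_mult_diff_rdistrib inner_diff_right)
  qed
  ultimately have "(\<lambda>t. mode_inner Q (?Y t)) \<longlonglongrightarrow> 0"
    by (intro summable_LIMSEQ_zero summable_mode_inner_second_moment[OF p \<open>psd P\<close>])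
  then have lim: "(\<lambda>t. mode_inner Q (?Y t) / q) \<longlonglongrightarrow> 0" for q
    by (rule tendsto_divide_zero)
  obtain q where q: "0 < q" "\<forall>u. q * (u \<bullet> u) \<le> u \<bullet> (Q j *v u)"
    using pos_def_coercive Q by blast
  have "norm (?Y t j $ a $ a) \<le> mode_inner Q (?Y t) / q" for t
    using second_moment_diag_bound[OF p \<open>psd Q\<close> less_imp_le[OF q(1)] q(2), of A B K i x t a]
      second_moment_diag_nonneg[OF p, of A B K i x t j a] q(1)
    by (simp add: pos_le_divide_eq mult.commute)
  then show "(\<lambda>t. ?Y t j $ a $ a) \<longlonglongrightarrow> 0"
    by (intro Lim_null_comparison[OF always_eventually lim]) blast
qed

section \<open>The gradient step\<close>

lemma gradient_step_quadratic_decrease: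
  fixes E :: "real^'n^'n" and R :: "real^'m^'m" and B :: "real^'m^'n"
    and c :: "real^'n" and z l :: "real^'m"
  assumes symE: "transpose E = E" and symR: "transpose R = R"
    and l: "l = R *v z - transpose B *v (E *v c)"
    and bound: "l \<bullet> ((R + transpose B ** E ** B) *v l) \<le> \<mu> * (l \<bullet> l)"
    and \<eta>: "0 \<le> \<eta>" "2 * \<eta> * \<mu> \<le> 1"
  shows "(c + B *v ((2 * \<eta>) *\<^sub>R l)) \<bullet> (E *v (c + B *v ((2 * \<eta>) *\<^sub>R l)))
      + (z - (2 * \<eta>) *\<^sub>R l) \<bullet> (R *v (z - (2 * \<eta>) *\<^sub>R l)) \<le> c \<bullet> (E *v c) + z \<bullet> (R *v z)"
proof -
  define d where "d = (2 * \<eta>) *\<^sub>R l"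
  \<comment> \<open>completing the square: the left-hand side equals the right-hand side
     minus 4 \<eta> |l|^2 plus 4 \<eta>^2 l^T (R + B^T E B) l\<close>
  have cross: "(B *v d) \<bullet> (E *v c) = d \<bullet> (R *v z) - d \<bullet> l"
    by (simp add: l inner_transpose_mult[symmetric] inner_diff_right)
  have "(c + B *v d) \<bullet> (E *v (c + B *v d)) + (z - d) \<bullet> (R *v (z - d))
      = c \<bullet> (E *v c) + z \<bullet> (R *v z) - 2 * (d \<bullet> l) + d \<bullet> ((R + transpose B ** E ** B) *v d)"
    using inner_symmetric_matrix[OF symE, of c "B *v d"] inner_symmetric_matrix[OF symR, of z d]
    by (simp add: cross inner_congruence matrix_vector_right_distrib matrix_vector_mult_diff_distrib
        matrix_vector_mult_add_rdistrib inner_add_left inner_add_right inner_diff_left inner_diff_right)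
  also have "d \<bullet> ((R + transpose B ** E ** B) *v d) \<le> (2 * \<eta>) * (2 * \<eta> * \<mu>) * (l \<bullet> l)"
    using mult_left_mono[OF bound, of "(2 * \<eta>) * (2 * \<eta>)"] \<eta>(1)
    by (simp add: d_def matrix_vector_mult_scaleR mult_ac)
  also have "\<dots> \<le> d \<bullet> l"
    using mult_left_mono[OF \<eta>(2), of "2 * \<eta> * (l \<bullet> l)"] \<eta>(1)
    by (simp add: d_def mult_ac)
  finally have "(c + B *v d) \<bullet> (E *v (c + B *v d)) + (z - d) \<bullet> (R *v (z - d))
      \<le> c \<bullet> (E *v c) + z \<bullet> (R *v z) - d \<bullet> l"
    by simp
  moreover have "0 \<le> d \<bullet> l"
    using \<eta>(1) by (simp add: d_def)
  ultimately show ?thesis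
    unfolding d_def by linarith
qed

lemma gradient_step_lyap_decrease:
  fixes K K' :: "'s::finite \<Rightarrow> real^'n^'m"
  assumes lyap: "P i = Q i + transpose (K i) ** R i ** K i + lyap_op A B p K P i"
    and symE: "transpose (Emap p P i) = Emap p P i" and symR: "transpose (R i) = R i"
    and bound: "\<forall>w. w \<bullet> ((R i + transpose (B i) ** Emap p P i ** B i) *v w) \<le> \<mu> * (w \<bullet> w)"
    and \<eta>: "0 \<le> \<eta>" "2 * \<eta> * \<mu> \<le> 1"
    and K': "K' i = K i - (2 * \<eta>) *\<^sub>R ((R i + transpose (B i) ** Emap p P i ** B i) ** K i
                                         - transpose (B i) ** Emap p P i ** A i)"
  shows "u \<bullet> (Q i *v u) + u \<bullet> ((transpose (K' i) ** R i ** K' i) *v u) + u \<bullet> (lyap_op A B p K' P i *v u)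
    \<le> u \<bullet> (P i *v u)"
proof -
  define E where "E = Emap p P i"
  define z where "z = K i *v u"
  define c where "c = closed_loop A B K i *v u"
  define l where "l = R i *v z - transpose (B i) *v (E *v c)"
  have gain: "K' i *v u = z - (2 * \<eta>) *\<^sub>R l"
    by (simp add: K' E_def z_def c_def l_def closed_loop_def matrix_vector_mult_diff_rdistrib
        matrix_vector_mult_add_rdistrib matrix_vector_mult_diff_distrib
        matrix_vector_mul_assoc[symmetric] scaleR_matrix_vector_assoc[symmetric] algebra_simps)
  have loop: "closed_loop A B K' i *v u = c + B i *v ((2 * \<eta>) *\<^sub>R l)"
    by (simp add: closed_loop_def c_def gain z_def matrix_vector_mult_diff_rdistrib
        matrix_vector_mult_diff_distrib matrix_vector_mul_assoc[symmetric] algebra_simps)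
  have "u \<bullet> (P i *v u) = u \<bullet> (Q i *v u) + z \<bullet> (R i *v z) + c \<bullet> (E *v c)"
    by (subst lyap) (simp add: lyap_op_def inner_congruence matrix_vector_mult_add_rdistrib
        inner_add_right E_def z_def c_def)
  moreover have "(c + B i *v ((2 * \<eta>) *\<^sub>R l)) \<bullet> (E *v (c + B i *v ((2 * \<eta>) *\<^sub>R l)))
      + (z - (2 * \<eta>) *\<^sub>R l) \<bullet> (R i *v (z - (2 * \<eta>) *\<^sub>R l)) \<le> c \<bullet> (E *v c) + z \<bullet> (R i *v z)"
    using bound \<eta> unfolding E_def[symmetric]
    by (intro gradient_step_quadratic_decrease[OF symE[folded E_def] symR l_def]) auto
  ultimately show ?thesis
    by (simp add: lyap_op_def inner_congruence gain loop E_def)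
qed

lemma P_of_gradient_step_decrease:
  fixes K K' :: "'s::finite \<Rightarrow> real^'n^'m"
  assumes p: "\<forall>i j. 0 \<le> p i j" and stable: "ms_stable A B p K"
    and Q: "\<forall>i. pos_def (Q i)" and R: "\<forall>i. pos_def (R i)"
    and \<eta>: "0 \<le> \<eta>" "2 * \<eta> * max_norm (\<lambda>i. R i + transpose (B i) ** Emap p (P_of A B Q R p K) i ** B i) \<le> 1"
    and K': "K' = (\<lambda>i. K i - (2 * \<eta>) *\<^sub>R L_of A B Q R p K i)"
  shows "u \<bullet> (Q i *v u) + u \<bullet> (lyap_op A B p K' (P_of A B Q R p K) i *v u)
    \<le> u \<bullet> (P_of A B Q R p K i *v u)"
proof -
  let ?P = "P_of A B Q R p K"
  have sym: "\<forall>i. transpose (Q i) = Q i" "\<forall>i. transpose (R i) = R i"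
    using Q R by (simp_all add: pos_def_def)
  have "transpose (Emap p ?P i) = Emap p ?P i"
    using P_of_symmetric[OF p stable sym] by (simp add: Emap_transpose)
  then have "u \<bullet> (Q i *v u) + u \<bullet> ((transpose (K' i) ** R i ** K' i) *v u) + u \<bullet> (lyap_op A B p K' ?P i *v u)
      \<le> u \<bullet> (?P i *v u)"
    using \<eta> sym(2) K' quadratic_le_max_norm
    by (intro gradient_step_lyap_decrease[OF P_of_lyap_eq[OF p stable]])
      (auto simp: L_of_def Let_def)
  moreover have "0 \<le> u \<bullet> ((transpose (K' i) ** R i ** K' i) *v u)"
    using R by (simp add: inner_congruence pos_def_nonneg)
  ultimately show ?thesis
    by linarith
qed

theorem lemma8:
  fixes A :: "'s::finite \<Rightarrow> real^'n^'n" and B :: "'s \<Rightarrow> real^'m^'n"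
    and Q :: "'s \<Rightarrow> real^'n^'n" and R :: "'s \<Rightarrow> real^'m^'m"
    and p :: "'s \<Rightarrow> 's \<Rightarrow> real" and K K' :: "'s \<Rightarrow> real^'n^'m" and \<eta> :: real
  assumes "stochastic p"
    and "\<exists>K0. K0 \<in> stabilizing_set A B p"
    and "\<forall>i. pos_def (Q i)" and "\<forall>i. pos_def (R i)"
    and "K \<in> stabilizing_set A B p"
    and "K' = (\<lambda>i. K i - (2 * \<eta>) *\<^sub>R L_of A B Q R p K i)"
    and "0 < \<eta>"
    and "\<eta> \<le> 1 / (2 * max_norm (\<lambda>i. R i + transpose (B i) ** Emap p (P_of A B Q R p K) i ** B i))"
  shows "K' \<in> stabilizing_set A B p"
proof -
  have p: "\<forall>i j. 0 \<le> p i j" and stable: "ms_stable A B p K"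
    using assms(1,5) by (simp_all add: stochastic_def stabilizing_set_def)
  define \<mu> where "\<mu> = max_norm (\<lambda>i. R i + transpose (B i) ** Emap p (P_of A B Q R p K) i ** B i)"
  have "2 * \<eta> * \<mu> \<le> 1"
  proof (cases "0 < \<mu>")
    case True
    then show ?thesis
      using assms(8) by (simp add: \<mu>_def le_divide_eq mult_ac)
  next
    case False
    then show ?thesis
      using mult_nonneg_nonpos[of "2 * \<eta>" \<mu>] assms(7) by linarith
  qed
  then have "\<forall>i u. u \<bullet> (Q i *v u) + u \<bullet> (lyap_op A B p K' (P_of A B Q R p K) i *v u)
      \<le> u \<bullet> (P_of A B Q R p K i *v u)"
    using P_of_gradient_step_decrease[OF p stable assms(3,4) _ _ assms(6)] assms(7)
    unfolding \<mu>_def by simp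
  then have "ms_stable A B p K'"
    by (rule ms_stable_if_lyap_decrease[OF p P_of_psd[OF p stable assms(3,4)] assms(3)])
  then show ?thesis
    by (simp add: stabilizing_set_def)
qed

end
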